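(* Let $J$ be a januarial of general type $((h_1,g_1),(h_2,g_2))$, embedded in a closed orientable surface of genus $g$, and let $\alpha=v-e$, where $v$ is the number of vertices and $e$ the number of edges of the common graph $\Upsilon$ of $J$. Then $$g=g_1+g_2+\frac{h_1+h_2+\alpha}{2}-1.$$
   Context: Let $\Delta(2,k,\ell)=\langle x,y : x^2=y^k=(xy)^\ell=1\rangle$ with $k,\ell\in\mathbb{Z}_{\ge 2}\cup\{\infty\}$, acting on a finite set $S$. The coset graph $\Gamma$ of this action is defined as follows. Its vertices are the elements of $S$. Two vertices transposed by $x$ are joined by an undirected $x$-edge, and points fixed by $x$ carry no $x$-edge. There is a directed $y$-edge from $u$ to $u y$. $\Gamma$ is $2$-cell embedded in a closed orientable surface using the rotation system that cyclically orders, at each vertex, its incoming $y$-edge, its outgoing $y$-edge and its $x$-edge. The faces of this embedding have boundary labels $y^n$ with $n\mid k$ (called $y$-faces) or $(xy)^m$ with $m\mid\ell$ (called $xy$-faces). The embedded graph is the coset diagram. A januarial $J$ is the coset diagram of such an action in which $\langle xy\rangle$ has exactly two orbits, each of size $|S|/2$; so $J$ has exactly two $xy$-faces. The genus of $J$ is the genus of this surface. Let $S_1,S_2$ be the closures of the two $xy$-faces (discs). Collapsing every $y$-face to a point gives the companion graph $\Gamma'$ and the companion diagram $J'$; let $S_i'$ be the images of $S_i$. Let $R_i$ be a small closed neighbourhood of $S_i'$ in $J'$. Then $R_i$ is a compact surface with boundary; let $g_i$ be its genus and $h_i$ the number of boundary components of $R_i$. The common graph is $\Upsilon=S_1'\cap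 S_2'$. $J$ is of simple type if $\Upsilon$ is a union of $h$ pairwise disjoint simple circuits; in that case $h_1=h_2=h$ and the type is written $(h,g_1,g_2)$. Otherwise $J$ is of general type, written $((h_1,g_1),(h_2,g_2))$. *)

theory Defs
  imports Complex_Main "HOL-Library.Extended_Nat" "HOL-Combinatorics.Permutations"
begin

(* Right action: u.x.y = y (x u), so the
   element xy acts as the function y o x.  k, l in {2,3,...} u {infinity}. *)
definition delta_action :: "enat \<Rightarrow> enat \<Rightarrow> 'a set \<Rightarrow> ('a \<Rightarrow> 'a) \<Rightarrow> ('a \<Rightarrow> 'a) \<Rightarrow> bool" where
  "delta_action k l S x y \<longleftrightarrow>
     finite S \<and> x permutes S \<and> y permutes S \<and>
     2 \<le> k \<and> 2 \<le> l \<and>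
     (\<forall>u\<in>S. x (x u) = u) \<and>
     (k \<noteq> \<infinity> \<longrightarrow> (\<forall>u\<in>S. (y ^^ the_enat k) u = u)) \<and>
     (l \<noteq> \<infinity> \<longrightarrow> (\<forall>u\<in>S. ((y \<circ> x) ^^ the_enat l) u = u))"

definition transitive_action :: "'a set \<Rightarrow> ('a \<Rightarrow> 'a) \<Rightarrow> ('a \<Rightarrow> 'a) \<Rightarrow> bool" where
  "transitive_action S x y \<longleftrightarrow>
     (\<forall>u\<in>S. \<forall>v\<in>S. (u, v) \<in> ({(a, x a) | a. a \<in> S} \<union> {(a, y a) | a. a \<in> S})\<^sup>*)"

definition orb :: "('a \<Rightarrow> 'a) \<Rightarrow> 'a \<Rightarrow> 'a set" where
  "orb p u = range (\<lambda>n. (p ^^ n) u)"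

definition orbits :: "'a set \<Rightarrow> ('a \<Rightarrow> 'a) \<Rightarrow> 'a set set" where
  "orbits S p = orb p ` S"

(* januarial: <xy> has exactly two orbits O1, O2, each of size |S|/2;
   O1, O2 are the point sets of the two xy-faces S_1, S_2 *)
definition januarial :: "'a set \<Rightarrow> ('a \<Rightarrow> 'a) \<Rightarrow> ('a \<Rightarrow> 'a) \<Rightarrow> 'a set \<Rightarrow> 'a set \<Rightarrow> bool" where
  "januarial S x y O1 O2 \<longleftrightarrow>
     orbits S (y \<circ> x) = {O1, O2} \<and> O1 \<noteq> O2 \<and>
     2 * card O1 = card S \<and> 2 * card O2 = card S"

definition x_edges :: "'a set \<Rightarrow> ('a \<Rightarrow> 'a) \<Rightarrow> 'a set set" where
  "x_edges S x = {{u, x u} | u. u \<in> S \<and> x u \<noteq> u}"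

(* Euler characteristic V - E + F of the coset diagram:
   |S| vertices, |S| directed y-edges plus the x-edges,
   faces = y-faces (<y>-orbits) and xy-faces (<xy>-orbits) *)
definition coset_euler_char :: "'a set \<Rightarrow> ('a \<Rightarrow> 'a) \<Rightarrow> ('a \<Rightarrow> 'a) \<Rightarrow> int" where
  "coset_euler_char S x y =
     int (card S) - int (card S + card (x_edges S x))
     + int (card (orbits S y) + card (orbits S (y \<circ> x)))"

definition is_surface_genus :: "'a set \<Rightarrow> ('a \<Rightarrow> 'a) \<Rightarrow> ('a \<Rightarrow> 'a) \<Rightarrow> nat \<Rightarrow> bool" where
  "is_surface_genus S x y g \<longleftrightarrow> coset_euler_char S x y = 2 - 2 * int g"

(* Companion diagram J': vertices = <y>-orbits (collapsed y-faces), edges = x-edges,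
   faces = the xy-faces.  The closure S_i' of the face with point set Oi: *)
definition face_vertices :: "('a \<Rightarrow> 'a) \<Rightarrow> 'a set \<Rightarrow> 'a set set" where
  "face_vertices y Oi = orb y ` Oi"

definition face_edges :: "('a \<Rightarrow> 'a) \<Rightarrow> 'a set \<Rightarrow> 'a set set" where
  "face_edges x Oi = {{u, x u} | u. u \<in> Oi \<and> x u \<noteq> u}"

(* The neighbourhood R_i of S_i' is the ribbon neighbourhood of the boundary graph
   of face i (darts = half-edges of the edges of S_i', with the rotation induced from
   J') with the disc of face i glued to one of its boundary curves. *)
definition sub_darts :: "'a set \<Rightarrow> ('a \<Rightarrow> 'a) \<Rightarrow> 'a set \<Rightarrow> 'a set" where
  "sub_darts S x Oi = {u \<in> S. x u \<noteq> u \<and> (u \<in> Oi \<or> x u \<in> Oi)}"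

(* induced rotation at a vertex: next dart of D in the cyclic order given by y *)
definition sub_rot :: "('a \<Rightarrow> 'a) \<Rightarrow> 'a set \<Rightarrow> 'a \<Rightarrow> 'a" where
  "sub_rot y D w = (y ^^ (LEAST j. 0 < j \<and> (y ^^ j) w \<in> D)) w"

definition sub_face_perm :: "('a \<Rightarrow> 'a) \<Rightarrow> ('a \<Rightarrow> 'a) \<Rightarrow> 'a set \<Rightarrow> 'a \<Rightarrow> 'a" where
  "sub_face_perm x y D u = sub_rot y D (x u)"

definition nbhd_boundary_walks :: "'a set \<Rightarrow> ('a \<Rightarrow> 'a) \<Rightarrow> ('a \<Rightarrow> 'a) \<Rightarrow> 'a set \<Rightarrow> 'a set set" where
  "nbhd_boundary_walks S x y Oi =
     orbits (sub_darts S x Oi) (sub_face_perm x y (sub_darts S x Oi))"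

(* h_i = number of boundary components of R_i (one boundary curve is capped by face i) *)
definition R_boundary_count :: "'a set \<Rightarrow> ('a \<Rightarrow> 'a) \<Rightarrow> ('a \<Rightarrow> 'a) \<Rightarrow> 'a set \<Rightarrow> nat" where
  "R_boundary_count S x y Oi = card (nbhd_boundary_walks S x y Oi) - 1"

(* g_i = genus of R_i: genus of the closed surface obtained by capping every boundary
   curve of the ribbon neighbourhood by a disc (V - E + F = 2 - 2 g_i) *)
definition is_R_genus :: "'a set \<Rightarrow> ('a \<Rightarrow> 'a) \<Rightarrow> ('a \<Rightarrow> 'a) \<Rightarrow> 'a set \<Rightarrow> nat \<Rightarrow> bool" where
  "is_R_genus S x y Oi gi \<longleftrightarrow>
     int (card (face_vertices y Oi)) - int (card (face_edges x Oi))
       + int (card (nbhd_boundary_walks S x y Oi)) = 2 - 2 * int gi"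

definition common_vertices :: "('a \<Rightarrow> 'a) \<Rightarrow> 'a set \<Rightarrow> 'a set \<Rightarrow> 'a set set" where
  "common_vertices y O1 O2 = face_vertices y O1 \<inter> face_vertices y O2"

definition common_edges :: "('a \<Rightarrow> 'a) \<Rightarrow> 'a set \<Rightarrow> 'a set \<Rightarrow> 'a set set" where
  "common_edges x O1 O2 = face_edges x O1 \<inter> face_edges x O2"

definition common_alpha :: "('a \<Rightarrow> 'a) \<Rightarrow> ('a \<Rightarrow> 'a) \<Rightarrow> 'a set \<Rightarrow> 'a set \<Rightarrow> int" where
  "common_alpha x y O1 O2 =
     int (card (common_vertices y O1 O2)) - int (card (common_edges x O1 O2))"

(* a simple circuit of Upsilon: distinct vertices v_0..v_{n-1}, distinct edges
   e_0..e_{n-1}, n >= 1, e_j joining v_j and v_{j+1 mod n}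
   (an edge {u, x u} joins the <y>-orbits of u and x u) *)
definition simple_circuit :: "('a \<Rightarrow> 'a) \<Rightarrow> ('a \<Rightarrow> 'a) \<Rightarrow> 'a set \<Rightarrow> 'a set \<Rightarrow>
    'a set list \<times> 'a set list \<Rightarrow> bool" where
  "simple_circuit x y O1 O2 c \<longleftrightarrow>
     (let vs = fst c; es = snd c; n = length vs in
       0 < n \<and> length es = n \<and> distinct vs \<and> distinct es \<and>
       set vs \<subseteq> common_vertices y O1 O2 \<and> set es \<subseteq> common_edges x O1 O2 \<and>
       (\<forall>j<n. orb y ` (es ! j) = {vs ! j, vs ! ((j + 1) mod n)}))"

definition simple_type :: "('a \<Rightarrow> 'a) \<Rightarrow> ('a \<Rightarrow> 'a) \<Rightarrow> 'a set \<Rightarrow> 'a set \<Rightarrow> bool" where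
  "simple_type x y O1 O2 \<longleftrightarrow>
     (\<exists>C. finite C \<and> (\<forall>c\<in>C. simple_circuit x y O1 O2 c) \<and>
        (\<forall>c\<in>C. \<forall>c'\<in>C. c \<noteq> c' \<longrightarrow> set (fst c) \<inter> set (fst c') = {}) \<and>
        (\<Union>c\<in>C. set (fst c)) = common_vertices y O1 O2 \<and>
        (\<Union>c\<in>C. set (snd c)) = common_edges x O1 O2)"

end

theory Submission
  imports Defs
begin

(* The formula is additivity of the Euler characteristic.  Since the coset diagram has
   exactly two faces, chi(J) = V - E + 2 with V, E the vertex and edge numbers of the
   companion graph, and capping the h_i + 1 boundary curves of R_i gives
   2 - 2 g_i = v_i - e_i + h_i + 1.  The companion graph is the union of the two face
   closures, which meet in the common graph, so v_1 + v_2 - e_1 - e_2 = V - E + alpha;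
   adding the two capped characteristics yields 2 - 2 g = 2 - 2 g_1 - 2 g_2 - h_1 - h_2 - alpha. *)

lemma self_in_orb: "u \<in> orb p u"
  unfolding orb_def by (metis funpow_0 rangeI)

lemma orb_closed:
  assumes "v \<in> orb p u"
  shows "p v \<in> orb p u"
proof -
  obtain n where "v = (p ^^ n) u"
    using assms unfolding orb_def by auto
  then have "p v = (p ^^ Suc n) u"
    by simp
  then show ?thesis
    unfolding orb_def by blast
qed

lemma orb_subset: "p permutes S \<Longrightarrow> u \<in> S \<Longrightarrow> orb p u \<subseteq> S"
  unfolding orb_def by (auto intro: permutes_in_funpow_image)

lemma card_orbits_pos: "finite D \<Longrightarrow> D \<noteq> {} \<Longrightarrow> 0 < card (orbits D p)"
  unfolding orbits_def by (simp add: card_gt_0_iff)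

lemma transitive_action_invariant_subset:
  assumes t: "transitive_action S x y" and "T \<subseteq> S" "u \<in> T"
    and x_inv: "\<And>v. v \<in> T \<Longrightarrow> x v \<in> T" and y_inv: "\<And>v. v \<in> T \<Longrightarrow> y v \<in> T"
  shows "T = S"
proof
  let ?R = "{(a, x a) | a. a \<in> S} \<union> {(a, y a) | a. a \<in> S}"
  have stays: "(a, b) \<in> ?R\<^sup>* \<Longrightarrow> a \<in> T \<Longrightarrow> b \<in> T" for a b
    by (induction rule: rtrancl_induct) (auto intro: x_inv y_inv)
  show "S \<subseteq> T"
    using t stays \<open>T \<subseteq> S\<close> \<open>u \<in> T\<close> unfolding transitive_action_def by blast
qed fact

lemma januarial_sym: "januarial S x y O1 O2 \<Longrightarrow> januarial S x y O2 O1"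
  unfolding januarial_def by (auto simp: insert_commute)

lemma januarial_face_is_orbit:
  assumes "januarial S x y O1 O2"
  obtains u where "u \<in> S" "O1 = orb (y \<circ> x) u"
proof -
  have "O1 \<in> orbits S (y \<circ> x)"
    using assms unfolding januarial_def by simp
  then show ?thesis
    using that unfolding orbits_def by blast
qed

lemma januarial_face_subset:
  assumes d: "delta_action k l S x y" and j: "januarial S x y O1 O2"
  shows "O1 \<subseteq> S"
proof -
  have "(y \<circ> x) permutes S"
    using d unfolding delta_action_def by (auto intro: permutes_compose)
  moreover obtain u where "u \<in> S" "O1 = orb (y \<circ> x) u"
    using januarial_face_is_orbit[OF j] .
  ultimately show ?thesis
    by (simp add: orb_subset)
qed

lemma januarial_faces_cover:
  assumes d: "delta_action k l S x y" and j: "januarial S x y O1 O2"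
  shows "S = O1 \<union> O2"
proof
  show "O1 \<union> O2 \<subseteq> S"
    using januarial_face_subset[OF d j] januarial_face_subset[OF d januarial_sym[OF j]] by auto
  show "S \<subseteq> O1 \<union> O2"
  proof
    fix u
    assume "u \<in> S"
    then have "orb (y \<circ> x) u \<in> {O1, O2}"
      using j unfolding januarial_def orbits_def by blast
    then show "u \<in> O1 \<union> O2"
      using self_in_orb[of u "y \<circ> x"] by blast
  qed
qed

lemma januarial_face_proper:
  assumes d: "delta_action k l S x y" and j: "januarial S x y O1 O2"
  shows "O1 \<noteq> S"
proof -
  have "S \<noteq> {}" and "finite S"
    using j d unfolding januarial_def orbits_def delta_action_def by auto
  then have "0 < card S"
    by (simp add: card_gt_0_iff)
  moreover have "2 * card O1 = card S"
    using j unfolding januarial_def by simp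
  ultimately have "card O1 < card S"
    by linarith
  then show ?thesis
    by blast
qed

text \<open>A face none of whose points carries an x-edge would be invariant under x and y,
  hence everything by transitivity; this is what makes h_i = |boundary walks| - 1
  a genuine difference rather than truncated subtraction.\<close>

lemma januarial_face_has_x_edge:
  assumes d: "delta_action k l S x y" and t: "transitive_action S x y"
    and j: "januarial S x y O1 O2"
  shows "\<exists>u\<in>O1. x u \<noteq> u"
proof (rule ccontr)
  assume "\<not> ?thesis"
  then have x_fix: "\<And>u. u \<in> O1 \<Longrightarrow> x u = u" by auto
  obtain u0 where "u0 \<in> S" and O1: "O1 = orb (y \<circ> x) u0"
    using januarial_face_is_orbit[OF j] .
  have y_inv: "y u \<in> O1" if "u \<in> O1" for u
    using orb_closed[of u "y \<circ> x" u0] that x_fix[OF that] O1 by simp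
  have "O1 = S"
    using self_in_orb[of u0 "y \<circ> x"] O1 x_fix y_inv
    by (intro transitive_action_invariant_subset[OF t januarial_face_subset[OF d j]]) auto
  with januarial_face_proper[OF d j] show False ..
qed

lemma nbhd_boundary_walks_nonempty:
  assumes d: "delta_action k l S x y" and t: "transitive_action S x y"
    and j: "januarial S x y O1 O2"
  shows "1 \<le> card (nbhd_boundary_walks S x y O1)"
proof -
  have "finite (sub_darts S x O1)"
    using d unfolding delta_action_def sub_darts_def by auto
  moreover have "sub_darts S x O1 \<noteq> {}"
    using januarial_face_has_x_edge[OF d t j] januarial_face_subset[OF d j]
    unfolding sub_darts_def by blast
  ultimately have "0 < card (nbhd_boundary_walks S x y O1)"
    unfolding nbhd_boundary_walks_def by (rule card_orbits_pos)
  then show ?thesis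
    by linarith
qed

lemma capped_R_euler_char:
  assumes "is_R_genus S x y Oi gi" "hi = R_boundary_count S x y Oi"
    and "1 \<le> card (nbhd_boundary_walks S x y Oi)"
  shows "2 - 2 * int gi
    = int (card (face_vertices y Oi)) - int (card (face_edges x Oi)) + int hi + 1"
  using assms unfolding is_R_genus_def R_boundary_count_def by auto

lemma januarial_euler_char:
  "januarial S x y O1 O2 \<Longrightarrow>
    coset_euler_char S x y = int (card (orbits S y)) - int (card (x_edges S x)) + 2"
  unfolding januarial_def coset_euler_char_def by auto

lemma face_closures_inclusion_exclusion:
  assumes "finite S" "S = O1 \<union> O2"
  shows "int (card (face_vertices y O1)) + int (card (face_vertices y O2))
      - int (card (face_edges x O1)) - int (card (face_edges x O2))
    = int (card (orbits S y)) - int (card (x_edges S x)) + common_alpha x y O1 O2"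
proof -
  have "finite O1" "finite O2"
    using assms by auto
  then have fin: "finite (face_vertices y O1)" "finite (face_vertices y O2)"
    "finite (face_edges x O1)" "finite (face_edges x O2)"
    unfolding face_vertices_def face_edges_def by (auto simp: setcompr_eq_image)
  have "face_vertices y O1 \<union> face_vertices y O2 = orbits S y"
    unfolding face_vertices_def orbits_def assms(2) by (simp add: image_Un)
  moreover have "face_edges x O1 \<union> face_edges x O2 = x_edges S x"
    unfolding face_edges_def x_edges_def assms(2) by blast
  ultimately show ?thesis
    using card_Un_Int[OF fin(1,2)] card_Un_Int[OF fin(3,4)]
    unfolding common_alpha_def common_vertices_def common_edges_def by simp
qed

theorem lemma5:
  fixes S :: "'a set" and x y :: "'a \<Rightarrow> 'a" and k l :: enat
    and O1 O2 :: "'a set" and g g1 g2 h1 h2 :: nat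
  assumes "delta_action k l S x y"
    and "transitive_action S x y"
    and "januarial S x y O1 O2"
    and "\<not> simple_type x y O1 O2"
    and "is_surface_genus S x y g"
    and "is_R_genus S x y O1 g1" and "h1 = R_boundary_count S x y O1"
    and "is_R_genus S x y O2 g2" and "h2 = R_boundary_count S x y O2"
  shows "real g = real g1 + real g2
           + (real h1 + real h2 + real_of_int (common_alpha x y O1 O2)) / 2 - 1"
proof -
  note d = assms(1) and t = assms(2) and j = assms(3)
  have R1: "2 - 2 * int g1
      = int (card (face_vertices y O1)) - int (card (face_edges x O1)) + int h1 + 1"
    using capped_R_euler_char[OF assms(6,7) nbhd_boundary_walks_nonempty[OF d t j]] .
  have R2: "2 - 2 * int g2
      = int (card (face_vertices y O2)) - int (card (face_edges x O2)) + int h2 + 1"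
    using capped_R_euler_char[OF assms(8,9)]
      nbhd_boundary_walks_nonempty[OF d t januarial_sym[OF j]] .
  have J: "2 - 2 * int g = int (card (orbits S y)) - int (card (x_edges S x)) + 2"
    using assms(5) januarial_euler_char[OF j] unfolding is_surface_genus_def by simp
  have "finite S"
    using d unfolding delta_action_def by simp
  from face_closures_inclusion_exclusion[where x = x and y = y, OF this januarial_faces_cover[OF d j]]
    and R1 R2 J
  have "2 * int g = 2 * int g1 + 2 * int g2 + int h1 + int h2 + common_alpha x y O1 O2 - 2"
    by linarith
  then have "real_of_int (2 * int g)
      = real_of_int (2 * int g1 + 2 * int g2 + int h1 + int h2 + common_alpha x y O1 O2 - 2)"
    by (rule arg_cong)
  then show ?thesis
    by (simp add: field_simps)
qed

end
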